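(* Online gradient descent with a fixed restart schedule (as defined in the context) is a linear forecaster. Consequently, for fixed constants $C>0$, $U>0$, $\sigma>0$, its worst-case expected cumulative squared error $\sup_{\theta_{1:n}}\mathbb{E}\big[\sum_{t=1}^n(x_t-\theta_t)^2\big]$, the supremum being over $\theta_{1:n}\in\mathrm{TV}(C)$ with $|\theta_1|\le U$, is at least $\tilde\Omega(\sqrt n)$ as $n\to\infty$, whatever the restart schedule and step sizes.
   Context: Setting: $y_t=\theta_t+Z_t$ with $Z_1,\dots,Z_n$ independent zero-mean $\sigma$-subgaussian noise; the forecaster outputs $x_t$ based on $y_1,\dots,y_{t-1}$ only. $\mathrm{TV}(C)=\{\theta_{1:n}:\sum_{i=2}^n|\theta_i-\theta_{i-1}|\le C\}$. A linear forecaster is one whose predictions satisfy $x_t=\sum_{s<t}a_{t,s}y_s$ for a fixed, data-independent array of coefficients $a_{t,s}$. Online gradient descent (OGD) with a fixed restart schedule: the time axis $1,\dots,n$ is partitioned into consecutive blocks by a schedule fixed in advance; at the start of each block the iterate is reset to a fixed linear combination of past observations (e.g. $0$ or the previous observation), and within a block it is updated by $x_{t+1}=x_t-\eta_t\cdot 2(x_t-y_t)$ (the stochastic gradient of the loss $(x-\theta_t)^2$) with fixed, data-independent step sizes $\eta_t$. $\tilde\Omega$ hides logarithmic factors in $n$. *)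

theory Defs
  imports "HOL-Probability.Probability"
begin

text \<open>Time indices are 1-based: t = 1..n. Observations y :: nat => real.\<close>

definition linear_forecaster :: "((nat \<Rightarrow> real) \<Rightarrow> nat \<Rightarrow> real) \<Rightarrow> bool" where
  "linear_forecaster f \<longleftrightarrow>
     (\<exists>a :: nat \<Rightarrow> nat \<Rightarrow> real. \<forall>y t. 1 \<le> t \<longrightarrow> f y t = (\<Sum>s\<in>{1..<t}. a t s * y s))"

text \<open>R = set of block start times (time 1 is always
  a block start); at a block start t the iterate is reset to the fixed linear combination
  sum_{s<t} b t s * y s of past observations; inside a block
  x_{t+1} = x_t - eta_t * 2 (x_t - y_t).\<close>
fun ogd :: "nat set \<Rightarrow> (nat \<Rightarrow> nat \<Rightarrow> real) \<Rightarrow> (nat \<Rightarrow> real) \<Rightarrow> (nat \<Rightarrow> real) \<Rightarrow> nat \<Rightarrow> real" where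
  "ogd R b eta y 0 = 0"
| "ogd R b eta y (Suc t) =
     (if t = 0 \<or> Suc t \<in> R then (\<Sum>s\<in>{1..<Suc t}. b (Suc t) s * y s)
      else ogd R b eta y t - eta t * (2 * (ogd R b eta y t - y t)))"

definition TV :: "nat \<Rightarrow> real \<Rightarrow> (nat \<Rightarrow> real) set" where
  "TV n C = {\<theta>. (\<Sum>i\<in>{2..n}. \<bar>\<theta> i - \<theta> (i - 1)\<bar>) \<le> C}"

text \<open>Noise Z_1..Z_n i.i.d. N(0, sigma^2) (a zero-mean sigma-subgaussian law).\<close>
definition noise :: "real \<Rightarrow> nat \<Rightarrow> (nat \<Rightarrow> real) measure" where
  "noise \<sigma> n = (\<Pi>\<^sub>M t\<in>{1..n}. density lborel (normal_density 0 \<sigma>))"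

definition risk :: "((nat \<Rightarrow> real) \<Rightarrow> nat \<Rightarrow> real) \<Rightarrow> real \<Rightarrow> nat \<Rightarrow> (nat \<Rightarrow> real) \<Rightarrow> ennreal" where
  "risk f \<sigma> n \<theta> =
     (\<integral>\<^sup>+ Z. ennreal (\<Sum>t\<in>{1..n}. (f (\<lambda>s. \<theta> s + Z s) t - \<theta> t)\<^sup>2) \<partial>noise \<sigma> n)"

definition worst_risk :: "((nat \<Rightarrow> real) \<Rightarrow> nat \<Rightarrow> real) \<Rightarrow> real \<Rightarrow> real \<Rightarrow> real \<Rightarrow> nat \<Rightarrow> ennreal" where
  "worst_risk f C U \<sigma> n = (SUP \<theta>\<in>{\<theta>\<in>TV n C. \<bar>\<theta> 1\<bar> \<le> U}. risk f \<sigma> n \<theta>)"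

end

theory Submission
  imports Defs
begin

text \<open>OGD with restarts is linear, since its update reads x(t+1) = (1 - 2 eta t) x(t) + 2 eta t y(t).
  For a linear forecaster with coefficients a(t,s) the risk at time t is the squared bias plus
  \<sigma>^2 \<Sum>{a(t,s)^2 | s < t}, as only the first two moments of the noise matter. Test it on the n - 1
  signals jumping from 0 to C at a time \<tau>. Fix t and the window of the M jump times
  t - M < \<tau> \<le> t: either every partial sum \<Sum>{a(t,s) | \<tau> \<le> s < t} is at most 1/2, and then M of
  the signals have bias at least C/2 at time t; or one exceeds 1/2, and then Cauchy-Schwarz gives
  \<Sum>{a(t,s)^2 | s < t} \<ge> 1/(4M), a variance paid by all n - 1 signals. Averaging over \<tau> with M \<approx> \<surd>n
  shows that some jump signal has risk at least min(C^2, \<sigma>^2) \<surd>n / 16, without logarithmic loss.\<close>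

lemma (in prob_space) has_bochner_integral_const:
  "has_bochner_integral M (\<lambda>_. c :: real) c"
  by (simp add: has_bochner_integral_iff prob_space)

lemma (in product_sigma_finite) has_bochner_integral_PiM_prod:
  fixes f :: "'i \<Rightarrow> 'a \<Rightarrow> real"
  assumes "finite I" and "\<And>i. i \<in> I \<Longrightarrow> has_bochner_integral (M i) (f i) (c i)"
  shows "has_bochner_integral (Pi\<^sub>M I M) (\<lambda>x. \<Prod>i\<in>I. f i (x i)) (\<Prod>i\<in>I. c i)"
  using assms product_integrable_prod[of I f] product_integral_prod[of I f]
  by (simp add: has_bochner_integral_iff)

context
  fixes M :: "real measure" and v :: real
  assumes prob: "prob_space M"
    and mean: "has_bochner_integral M (\<lambda>x. x) 0"
    and second_moment: "has_bochner_integral M (\<lambda>x. x\<^sup>2) v"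
begin

private lemma has_bochner_integral_PiM_prod_iid:
  fixes f :: "'i \<Rightarrow> real \<Rightarrow> real"
  assumes "finite I" and "\<And>i. i \<in> I \<Longrightarrow> has_bochner_integral M (f i) (c i)"
  shows "has_bochner_integral (Pi\<^sub>M I (\<lambda>_. M)) (\<lambda>x. \<Prod>i\<in>I. f i (x i)) (\<Prod>i\<in>I. c i)"
proof -
  interpret product_sigma_finite "\<lambda>_. M"
    using prob by (simp add: product_sigma_finite_def prob_space_imp_sigma_finite)
  show ?thesis by (intro has_bochner_integral_PiM_prod) (use assms in auto)
qed

lemma has_bochner_integral_PiM_coordinate:
  assumes "finite I" and "i \<in> I"
  shows "has_bochner_integral (Pi\<^sub>M I (\<lambda>_. M)) (\<lambda>z. z i) 0"
proof -
  have "has_bochner_integral (Pi\<^sub>M I (\<lambda>_. M)) (\<lambda>z. \<Prod>j\<in>I. if j = i then z j else 1)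
          (\<Prod>j\<in>I. if j = i then 0 else 1)"
    using assms(1) mean prob_space.has_bochner_integral_const[OF prob]
    by (intro has_bochner_integral_PiM_prod_iid) auto
  then show ?thesis using assms by simp
qed

lemma has_bochner_integral_PiM_coordinate_mult:
  assumes "finite I" and "i \<in> I" and "j \<in> I"
  shows "has_bochner_integral (Pi\<^sub>M I (\<lambda>_. M)) (\<lambda>z. z i * z j) (if i = j then v else 0)"
proof (cases "i = j")
  case True
  have "has_bochner_integral (Pi\<^sub>M I (\<lambda>_. M)) (\<lambda>z. \<Prod>k\<in>I. if k = i then (z k)\<^sup>2 else 1)
          (\<Prod>k\<in>I. if k = i then v else 1)"
    using assms(1) second_moment prob_space.has_bochner_integral_const[OF prob]
    by (intro has_bochner_integral_PiM_prod_iid) auto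
  then show ?thesis using assms True by (simp add: power2_eq_square)
next
  case False
  have "has_bochner_integral (Pi\<^sub>M I (\<lambda>_. M))
          (\<lambda>z. \<Prod>k\<in>I. (if k = i then z k else 1) * (if k = j then z k else 1))
          (\<Prod>k\<in>I. (if k = i then 0 else 1) * (if k = j then 0 else 1))"
    using assms(1) mean prob_space.has_bochner_integral_const[OF prob] False
    by (intro has_bochner_integral_PiM_prod_iid) auto
  then show ?thesis using assms False by (simp add: prod.distrib)
qed

lemma has_bochner_integral_PiM_affine_square:
  assumes "finite I" and "S \<subseteq> I"
  shows "has_bochner_integral (Pi\<^sub>M I (\<lambda>_. M)) (\<lambda>z. (\<beta> + (\<Sum>s\<in>S. a s * z s))\<^sup>2)
           (\<beta>\<^sup>2 + v * (\<Sum>s\<in>S. (a s)\<^sup>2))"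
proof -
  have "finite S" using assms finite_subset by blast
  have expand: "(\<beta> + (\<Sum>s\<in>S. a s * z s))\<^sup>2 =
      \<beta>\<^sup>2 + (\<Sum>s\<in>S. 2 * \<beta> * a s * z s) + (\<Sum>s\<in>S. \<Sum>r\<in>S. a s * a r * (z s * z r))" for z
    by (simp add: power2_eq_square algebra_simps sum_distrib_left sum_product)
  have diagonal: "(\<Sum>s\<in>S. \<Sum>r\<in>S. a s * a r * (if s = r then v else 0)) = v * (\<Sum>s\<in>S. (a s)\<^sup>2)"
    using \<open>finite S\<close> by (simp add: if_distrib sum_distrib_left power2_eq_square mult_ac cong: if_cong)
  have "has_bochner_integral (Pi\<^sub>M I (\<lambda>_. M))
      (\<lambda>z. \<beta>\<^sup>2 + (\<Sum>s\<in>S. 2 * \<beta> * a s * z s) + (\<Sum>s\<in>S. \<Sum>r\<in>S. a s * a r * (z s * z r)))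
      (\<beta>\<^sup>2 + (\<Sum>s\<in>S. 2 * \<beta> * a s * 0) + (\<Sum>s\<in>S. \<Sum>r\<in>S. a s * a r * (if s = r then v else 0)))"
    using assms prob_space.has_bochner_integral_const[OF prob_space_PiM] prob
    by (intro has_bochner_integral_add has_bochner_integral_sum has_bochner_integral_mult_right
        has_bochner_integral_PiM_coordinate has_bochner_integral_PiM_coordinate_mult) auto
  then show ?thesis by (simp add: expand diagonal)
qed

end

lemma has_bochner_integral_normal_density_centered:
  assumes "\<sigma> > 0"
  shows "has_bochner_integral (density lborel (normal_density 0 \<sigma>)) (\<lambda>x. x) 0"
    and "has_bochner_integral (density lborel (normal_density 0 \<sigma>)) (\<lambda>x. x\<^sup>2) (\<sigma>\<^sup>2)"
  using normal_moment_nz_1[OF assms, of 0] normal_moment_even[OF assms, of 0 1] assms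
  by (auto intro!: has_bochner_integral_density)

definition linear_risk :: "(nat \<Rightarrow> nat \<Rightarrow> real) \<Rightarrow> real \<Rightarrow> nat \<Rightarrow> (nat \<Rightarrow> real) \<Rightarrow> real" where
  "linear_risk a \<sigma> n \<theta> =
     (\<Sum>t\<in>{1..n}. ((\<Sum>s\<in>{1..<t}. a t s * \<theta> s) - \<theta> t)\<^sup>2 + \<sigma>\<^sup>2 * (\<Sum>s\<in>{1..<t}. (a t s)\<^sup>2))"

lemma risk_linear_forecaster:
  assumes "\<sigma> > 0" and lin: "\<And>y t. 1 \<le> t \<Longrightarrow> f y t = (\<Sum>s\<in>{1..<t}. a t s * y s)"
  shows "risk f \<sigma> n \<theta> = ennreal (linear_risk a \<sigma> n \<theta>)"
proof -
  let ?bias = "\<lambda>t. (\<Sum>s\<in>{1..<t}. a t s * \<theta> s) - \<theta> t"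
  have error: "f (\<lambda>s. \<theta> s + Z s) t - \<theta> t = ?bias t + (\<Sum>s\<in>{1..<t}. a t s * Z s)"
    if "1 \<le> t" for Z t
    using that by (simp add: lin distrib_left sum.distrib)
  have "has_bochner_integral (noise \<sigma> n)
      (\<lambda>Z. \<Sum>t\<in>{1..n}. (?bias t + (\<Sum>s\<in>{1..<t}. a t s * Z s))\<^sup>2) (linear_risk a \<sigma> n \<theta>)"
    unfolding noise_def linear_risk_def
    by (intro has_bochner_integral_sum has_bochner_integral_PiM_affine_square[OF
        prob_space_normal_density[OF assms(1)] has_bochner_integral_normal_density_centered[OF assms(1)]])
      auto
  then have "has_bochner_integral (noise \<sigma> n)
      (\<lambda>Z. \<Sum>t\<in>{1..n}. (f (\<lambda>s. \<theta> s + Z s) t - \<theta> t)\<^sup>2) (linear_risk a \<sigma> n \<theta>)"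
    by (rule has_bochner_integral_cong[THEN iffD1, rotated 3]) (auto simp: error intro!: sum.cong)
  then show ?thesis
    unfolding risk_def
    by (subst nn_integral_eq_integral) (auto simp: has_bochner_integral_iff intro!: sum_nonneg)
qed

definition step_signal :: "real \<Rightarrow> nat \<Rightarrow> nat \<Rightarrow> real" where
  "step_signal C \<tau> s = (if \<tau> \<le> s then C else 0)"

lemma step_signal_admissible:
  assumes "0 \<le> C" and "0 \<le> U" and "\<tau> \<in> {2..n}"
  shows "step_signal C \<tau> \<in> {\<theta> \<in> TV n C. \<bar>\<theta> 1\<bar> \<le> U}"
proof -
  have "(\<Sum>i\<in>{2..n}. \<bar>step_signal C \<tau> i - step_signal C \<tau> (i - 1)\<bar>) = (\<Sum>i\<in>{2..n}. if i = \<tau> then C else 0)"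
    using assms by (intro sum.cong) (auto simp: step_signal_def)
  also have "\<dots> = C" using assms(3) by simp
  finally show ?thesis using assms by (auto simp: TV_def step_signal_def)
qed

lemma bias_step_signal:
  assumes "1 \<le> \<tau>" and "\<tau> \<le> t"
  shows "(\<Sum>s\<in>{1..<t}. a s * step_signal C \<tau> s) - step_signal C \<tau> t = C * ((\<Sum>s\<in>{\<tau>..<t}. a s) - 1)"
proof -
  have "(\<Sum>s\<in>{1..<t}. a s * step_signal C \<tau> s) = (\<Sum>s\<in>{s\<in>{1..<t}. \<tau> \<le> s}. a s * C)"
    unfolding sum.inter_filter[OF finite_atLeastLessThan] by (intro sum.cong) (auto simp: step_signal_def)
  also have "{s\<in>{1..<t}. \<tau> \<le> s} = {\<tau>..<t}" using assms by auto
  finally show ?thesis using assms by (simp add: step_signal_def sum_distrib_left right_diff_distrib mult.commute)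
qed


lemma window_bias_or_variance_ge:
  fixes a :: "nat \<Rightarrow> real"
  assumes "1 \<le> M" and "M < t" and "0 \<le> K"
  shows "min (C\<^sup>2 * real M / 4) (K / (4 * real M))
    \<le> (\<Sum>\<tau>\<in>{t+1-M..t}. (C * ((\<Sum>s\<in>{\<tau>..<t}. a s) - 1))\<^sup>2) + K * (\<Sum>s\<in>{1..<t}. (a s)\<^sup>2)"
proof (cases "\<forall>\<tau>\<in>{t+1-M..t}. (\<Sum>s\<in>{\<tau>..<t}. a s) \<le> 1/2")
  case True
  have "C\<^sup>2 / 4 \<le> (C * ((\<Sum>s\<in>{\<tau>..<t}. a s) - 1))\<^sup>2" if "\<tau> \<in> {t+1-M..t}" for \<tau>
  proof -
    have "(1/2)\<^sup>2 \<le> (1 - (\<Sum>s\<in>{\<tau>..<t}. a s))\<^sup>2"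
      using True that by (intro power_mono) auto
    then have "C\<^sup>2 * (1/2)\<^sup>2 \<le> C\<^sup>2 * (1 - (\<Sum>s\<in>{\<tau>..<t}. a s))\<^sup>2"
      by (intro mult_left_mono) auto
    also have "\<dots> = (C * ((\<Sum>s\<in>{\<tau>..<t}. a s) - 1))\<^sup>2"
      by (simp add: power_mult_distrib power2_commute)
    finally show ?thesis by (simp add: power2_eq_square)
  qed
  then have "real (card {t+1-M..t}) * (C\<^sup>2 / 4) \<le> (\<Sum>\<tau>\<in>{t+1-M..t}. (C * ((\<Sum>s\<in>{\<tau>..<t}. a s) - 1))\<^sup>2)"
    by (intro sum_bounded_below) auto
  moreover have "real (card {t+1-M..t}) * (C\<^sup>2 / 4) = C\<^sup>2 * M / 4" using assms by simp
  moreover have "0 \<le> K * (\<Sum>s\<in>{1..<t}. (a s)\<^sup>2)" using assms by (intro mult_nonneg_nonneg sum_nonneg) auto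
  ultimately show ?thesis by (intro min.coboundedI1) linarith
next
  case False
  then obtain \<tau> where \<tau>: "\<tau> \<in> {t+1-M..t}" and large: "1/2 < (\<Sum>s\<in>{\<tau>..<t}. a s)" by auto
  have "(1/2)\<^sup>2 < (\<Sum>s\<in>{\<tau>..<t}. a s)\<^sup>2" using large by (intro power_strict_mono) auto
  also have "\<dots> \<le> (\<Sum>s\<in>{\<tau>..<t}. (a s)\<^sup>2) * card {\<tau>..<t}"
    by (rule sum_squared_le_sum_of_squares)
  also have "\<dots> \<le> (\<Sum>s\<in>{1..<t}. (a s)\<^sup>2) * M"
    using \<tau> assms by (intro mult_mono sum_mono2) (auto intro: sum_nonneg)
  finally have "1 / (4 * real M) \<le> (\<Sum>s\<in>{1..<t}. (a s)\<^sup>2)"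
    using assms by (simp add: field_simps power2_eq_square)
  then have "K / (4 * real M) \<le> K * (\<Sum>s\<in>{1..<t}. (a s)\<^sup>2)"
    using mult_left_mono[OF _ assms(3)] by fastforce
  moreover have "0 \<le> (\<Sum>\<tau>\<in>{t+1-M..t}. (C * ((\<Sum>s\<in>{\<tau>..<t}. a s) - 1))\<^sup>2)" by (intro sum_nonneg) auto
  ultimately show ?thesis by (intro min.coboundedI2) linarith
qed


lemma sum_linear_risk_step_signal_ge:
  assumes "1 \<le> M" and "M \<le> n"
  shows "real (n - M) * min (C\<^sup>2 * real M / 4) ((real n - 1) * \<sigma>\<^sup>2 / (4 * real M))
    \<le> (\<Sum>\<tau>\<in>{2..n}. linear_risk a \<sigma> n (step_signal C \<tau>))"
proof -
  define bias where "bias \<tau> t = (\<Sum>s\<in>{1..<t}. a t s * step_signal C \<tau> s) - step_signal C \<tau> t" for \<tau> t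
  define error where "error t = (\<Sum>\<tau>\<in>{2..n}. (bias \<tau> t)\<^sup>2) + (real n - 1) * \<sigma>\<^sup>2 * (\<Sum>s\<in>{1..<t}. (a t s)\<^sup>2)" for t
  have error_nonneg: "0 \<le> error t" for t
    unfolding error_def using assms by (intro add_nonneg_nonneg mult_nonneg_nonneg sum_nonneg) auto
  have error_ge: "min (C\<^sup>2 * real M / 4) ((real n - 1) * \<sigma>\<^sup>2 / (4 * real M)) \<le> error t" if t: "t \<in> {M+1..n}" for t
  proof -
    have "(\<Sum>\<tau>\<in>{t+1-M..t}. (C * ((\<Sum>s\<in>{\<tau>..<t}. a t s) - 1))\<^sup>2) = (\<Sum>\<tau>\<in>{t+1-M..t}. (bias \<tau> t)\<^sup>2)"
    proof (intro sum.cong refl)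
      fix \<tau> assume "\<tau> \<in> {t+1-M..t}"
      then have "1 \<le> \<tau>" and "\<tau> \<le> t" using t by auto
      then show "(C * ((\<Sum>s\<in>{\<tau>..<t}. a t s) - 1))\<^sup>2 = (bias \<tau> t)\<^sup>2"
        unfolding bias_def by (simp only: bias_step_signal)
    qed
    also have "\<dots> \<le> (\<Sum>\<tau>\<in>{2..n}. (bias \<tau> t)\<^sup>2)"
      using t assms by (intro sum_mono2) auto
    finally show ?thesis
      using window_bias_or_variance_ge[of M t "(real n - 1) * \<sigma>\<^sup>2" C "a t"] t assms
      unfolding error_def by (simp add: mult.assoc)
  qed
  have "real (n - M) * min (C\<^sup>2 * real M / 4) ((real n - 1) * \<sigma>\<^sup>2 / (4 * real M)) \<le> (\<Sum>t\<in>{M+1..n}. error t)"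
    using sum_bounded_below[of "{M+1..n}" _ error] error_ge by simp
  also have "\<dots> \<le> (\<Sum>t\<in>{1..n}. error t)"
    using assms error_nonneg by (intro sum_mono2) auto
  also have "\<dots> = (\<Sum>\<tau>\<in>{2..n}. linear_risk a \<sigma> n (step_signal C \<tau>))"
    using assms unfolding linear_risk_def error_def bias_def
    by (subst sum.swap) (simp add: sum.distrib sum_distrib_left[symmetric])
  finally show ?thesis .
qed

lemma worst_risk_linear_forecaster_ge:
  assumes "\<sigma> > 0" and "0 \<le> C" and "0 \<le> U"
    and lin: "\<And>y t. 1 \<le> t \<Longrightarrow> f y t = (\<Sum>s\<in>{1..<t}. a t s * y s)"
    and "1 \<le> M" and "M \<le> n" and "2 \<le> n"
  shows "ennreal (real (n - M) * min (C\<^sup>2 * real M / 4) ((real n - 1) * \<sigma>\<^sup>2 / (4 * real M)) / (real n - 1))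
    \<le> worst_risk f C U \<sigma> n"
proof -
  let ?R = "\<lambda>\<tau>. linear_risk a \<sigma> n (step_signal C \<tau>)"
  have "Max (?R ` {2..n}) \<in> ?R ` {2..n}" using assms by (intro Max_in) auto
  then obtain \<tau> where \<tau>: "\<tau> \<in> {2..n}" and max: "?R \<tau> = Max (?R ` {2..n})" by (metis imageE)
  have "real (n - M) * min (C\<^sup>2 * real M / 4) ((real n - 1) * \<sigma>\<^sup>2 / (4 * real M)) \<le> (\<Sum>\<tau>\<in>{2..n}. ?R \<tau>)"
    using assms by (intro sum_linear_risk_step_signal_ge)
  also have "\<dots> \<le> (real n - 1) * ?R \<tau>"
    using sum_bounded_above[of "{2..n}" ?R "?R \<tau>"] assms by (simp add: max)
  finally have "real (n - M) * min (C\<^sup>2 * real M / 4) ((real n - 1) * \<sigma>\<^sup>2 / (4 * real M)) / (real n - 1) \<le> ?R \<tau>"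
    using assms by (simp add: pos_divide_le_eq mult.commute)
  then have "ennreal (real (n - M) * min (C\<^sup>2 * real M / 4) ((real n - 1) * \<sigma>\<^sup>2 / (4 * real M)) / (real n - 1))
      \<le> risk f \<sigma> n (step_signal C \<tau>)"
    using risk_linear_forecaster[OF assms(1) lin] by (simp add: ennreal_leI)
  also have "\<dots> \<le> worst_risk f C U \<sigma> n"
    unfolding worst_risk_def using step_signal_admissible[OF assms(2,3) \<tau>] by (rule SUP_upper)
  finally show ?thesis .
qed

lemma sqrt_window_tradeoff_ge:
  fixes C \<sigma> :: real
  assumes "4 \<le> n" and "real M \<le> sqrt n" and "sqrt n \<le> 2 * real M"
  shows "min (C\<^sup>2) (\<sigma>\<^sup>2) * sqrt n / 16
    \<le> real (n - M) * min (C\<^sup>2 * real M / 4) ((real n - 1) * \<sigma>\<^sup>2 / (4 * real M)) / (real n - 1)"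
proof -
  define q where "q = sqrt n"
  define m where "m = min (C\<^sup>2 * real M / 4) ((real n - 1) * \<sigma>\<^sup>2 / (4 * real M))"
  have q2: "q * q = n" and "2 \<le> q"
    using assms(1) real_sqrt_le_mono[of 4 n] by (auto simp: q_def)
  have "0 < real M" using assms \<open>2 \<le> q\<close> by (simp add: q_def)
  have "real M \<le> n / 2" using assms(2) q2 \<open>2 \<le> q\<close> mult_right_mono[of 2 q q]
    by (simp add: q_def)
  then have half: "n / 2 \<le> real (n - M)" by linarith
  have "C\<^sup>2 * q / 8 \<le> C\<^sup>2 * real M / 4"
    using mult_left_mono[OF assms(3), of "C\<^sup>2"] by (simp add: q_def mult_ac)
  moreover have "\<sigma>\<^sup>2 * q / 8 \<le> (real n - 1) * \<sigma>\<^sup>2 / (4 * real M)"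
  proof -
    have "\<sigma>\<^sup>2 * q / 8 = (q * q / 2) * \<sigma>\<^sup>2 / (4 * q)" using \<open>2 \<le> q\<close> by (simp add: field_simps)
    also have "\<dots> \<le> (real n - 1) * \<sigma>\<^sup>2 / (4 * real M)"
      using q2 assms \<open>0 < real M\<close> \<open>2 \<le> q\<close>
      by (intro frac_le mult_right_mono) (auto simp: q_def)
    finally show ?thesis .
  qed
  ultimately have "min (C\<^sup>2) (\<sigma>\<^sup>2) * q / 8 \<le> m"
    using mult_right_mono[OF min.cobounded1[of "C\<^sup>2" "\<sigma>\<^sup>2"], of q]
      mult_right_mono[OF min.cobounded2[of "C\<^sup>2" "\<sigma>\<^sup>2"], of q] \<open>2 \<le> q\<close>
    unfolding m_def by (intro min.boundedI) linarith+
  then have "min (C\<^sup>2) (\<sigma>\<^sup>2) * q / 16 \<le> m / 2" by linarith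
  also have "m / 2 \<le> real (n - M) * m / (real n - 1)"
  proof -
    have "0 \<le> m" using \<open>0 < real M\<close> assms(1) by (simp add: m_def)
    have "m / 2 = (n / 2) * m / real n" using assms(1) by simp
    also have "\<dots> \<le> real (n - M) * m / real n"
      using half \<open>0 \<le> m\<close> by (intro divide_right_mono mult_right_mono) auto
    also have "\<dots> \<le> real (n - M) * m / (real n - 1)"
      using \<open>0 \<le> m\<close> assms(1) by (intro divide_left_mono) auto
    finally show ?thesis .
  qed
  finally show ?thesis unfolding m_def q_def .
qed

lemma worst_risk_linear_forecaster_ge_sqrt:
  assumes "\<sigma> > 0" and "0 \<le> C" and "0 \<le> U" and "linear_forecaster f" and "4 \<le> n"
  shows "ennreal (min (C\<^sup>2) (\<sigma>\<^sup>2) * sqrt n / 16) \<le> worst_risk f C U \<sigma> n"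
proof -
  obtain a where lin: "\<And>y t. 1 \<le> t \<Longrightarrow> f y t = (\<Sum>s\<in>{1..<t}. a t s * y s)"
    using assms(4) unfolding linear_forecaster_def by blast
  define M where "M = nat \<lfloor>sqrt n\<rfloor>"
  have "2 \<le> sqrt n" using real_sqrt_le_mono[of 4 n] assms(5) by simp
  then have M_le: "real M \<le> sqrt n" and M_gt: "sqrt n < real M + 1" and "1 \<le> M"
    unfolding M_def by linarith+
  have "sqrt n \<le> n" using mult_right_mono[of 1 "sqrt n" "sqrt n"] \<open>2 \<le> sqrt n\<close> assms(5) by auto
  then have "M \<le> n" using M_le by linarith
  have "ennreal (min (C\<^sup>2) (\<sigma>\<^sup>2) * sqrt n / 16)
      \<le> ennreal (real (n - M) * min (C\<^sup>2 * real M / 4) ((real n - 1) * \<sigma>\<^sup>2 / (4 * real M)) / (real n - 1))"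
    using M_le M_gt \<open>1 \<le> M\<close> assms(5) by (intro ennreal_leI sqrt_window_tradeoff_ge) auto
  also have "\<dots> \<le> worst_risk f C U \<sigma> n"
    using assms \<open>1 \<le> M\<close> \<open>M \<le> n\<close> by (intro worst_risk_linear_forecaster_ge[OF _ _ _ lin]) auto
  finally show ?thesis .
qed

fun ogd_coeff :: "nat set \<Rightarrow> (nat \<Rightarrow> nat \<Rightarrow> real) \<Rightarrow> (nat \<Rightarrow> real) \<Rightarrow> nat \<Rightarrow> nat \<Rightarrow> real" where
  "ogd_coeff R b eta 0 s = 0"
| "ogd_coeff R b eta (Suc t) s =
     (if t = 0 \<or> Suc t \<in> R then b (Suc t) s
      else if s < t then (1 - 2 * eta t) * ogd_coeff R b eta t s
      else if s = t then 2 * eta t else 0)"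

lemma ogd_eq_sum_ogd_coeff: "ogd R b eta y t = (\<Sum>s\<in>{1..<t}. ogd_coeff R b eta t s * y s)"
proof (induction t)
  case 0
  then show ?case by simp
next
  case (Suc t)
  show ?case
  proof (cases "t = 0 \<or> Suc t \<in> R")
    case True
    then show ?thesis by (simp only: ogd.simps ogd_coeff.simps if_P)
  next
    case False
    then have "{1..<Suc t} = insert t {1..<t}" by auto
    then have "(\<Sum>s\<in>{1..<Suc t}. ogd_coeff R b eta (Suc t) s * y s)
        = 2 * eta t * y t + (1 - 2 * eta t) * (\<Sum>s\<in>{1..<t}. ogd_coeff R b eta t s * y s)"
      using False by (simp add: sum_distrib_left mult.assoc)
    then show ?thesis using False Suc.IH by (simp add: algebra_simps)
  qed
qed

lemma linear_forecaster_ogd: "linear_forecaster (ogd R b eta)"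
  unfolding linear_forecaster_def by (blast intro: ogd_eq_sum_ogd_coeff)

theorem proposition1:
  fixes C U \<sigma> :: real
    and R :: "nat \<Rightarrow> nat set"
    and b :: "nat \<Rightarrow> nat \<Rightarrow> nat \<Rightarrow> real"
    and eta :: "nat \<Rightarrow> nat \<Rightarrow> real"
  assumes "C > 0" and "U > 0" and "\<sigma> > 0"
  shows "(\<forall>n. linear_forecaster (ogd (R n) (b n) (eta n))) \<and>
         (\<exists>c>0. \<exists>k::nat. \<forall>\<^sub>F n in sequentially.
             ennreal (c * sqrt (real n) / (ln (real n)) ^ k)
               \<le> worst_risk (ogd (R n) (b n) (eta n)) C U \<sigma> n)"
proof
  show "\<forall>n. linear_forecaster (ogd (R n) (b n) (eta n))"
    by (simp add: linear_forecaster_ogd)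
  have "\<forall>\<^sub>F n in sequentially.
      ennreal (min (C\<^sup>2) (\<sigma>\<^sup>2) * sqrt n / 16) \<le> worst_risk (ogd (R n) (b n) (eta n)) C U \<sigma> n"
    using eventually_ge_at_top[of 4]
    by eventually_elim (use assms in \<open>auto intro: worst_risk_linear_forecaster_ge_sqrt linear_forecaster_ogd\<close>)
  then show "\<exists>c>0. \<exists>k::nat. \<forall>\<^sub>F n in sequentially.
      ennreal (c * sqrt (real n) / (ln (real n)) ^ k) \<le> worst_risk (ogd (R n) (b n) (eta n)) C U \<sigma> n"
    using assms by (intro exI[of _ "min (C\<^sup>2) (\<sigma>\<^sup>2) / 16"] exI[of _ 0] conjI) auto
qed

end
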